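(* Fix $f\in\mathbb{N}$ and $\ell=f+1$. For a family of directed graphs $G=(V,E)$ with $n=|V|\to\infty$, consider the reinforcement $V'=V\times[\ell]$, $P(v_i)=v$, $E'=\{(v',w'):(P(v'),P(w'))\in E\}$, with $A'$ defined from $A$ by: every $v'$ initializes copies of the state variables of $P(v')$, sends on each $(v',w')\in E'$ the message $P(v')$ would send on $(P(v'),P(w'))$ under $A$, and updates its state as if $P(v')$ received from each in-neighbor $w$ the unique message sent to $v'$ by some copy of $w$. Let $F'\subseteq V'$ contain each node independently with probability $p=p(n)$, faulty nodes suffering omission faults. (a) If $p\in o(n^{-1/(f+1)})$, then with probability $1-o(1)$ no $v\in V$ has all its $\ell$ copies in $F'$, and consequently $A'$ strongly simulates $A$ with probability $1-o(1)$, i.e., the reinforcement is a valid strong reinforcement under $\mathrm{Om}(p)$. (b) If $G$ contains $\Omega(n)$ nodes with non-zero outdegree and $p\in\omega(n^{-1/(f+1)})$, then with probability $1-o(1)$ all copies of some node with non-zero outdegree are faulty, and the reinforcement is not valid.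
   Context: Networks are synchronous directed graphs running a scheduling algorithm $A$ (each round: send messages on outgoing links based on state, then update state from received messages and environment input). $\mathrm{Om}(p)$: each node of $V'$ is independently faulty with probability $p$; faulty nodes may omit sending messages they should send but otherwise follow the protocol. Strong simulation under $\mathrm{Om}(p)$: assuming each $v'\in V'$ receives the same environment input as $P(v')$, every $v'\in V'$ computes in each round the state of $P(v')$ in the fault-free execution of $A$. A reinforcement is valid if $A'$ is a (strong) simulation of $A$ with probability $1-o(1)$ as $n\to\infty$ ($f$ fixed). *)

theory Defs
  imports "HOL-Probability.Probability" "HOL-Library.Landau_Symbols"
begin

text \<open>A synchronous algorithm on a directed graph (V,E) with vertices of type 'v:
  initial states, the message a node sends on an outgoing link given its state,
  and the state update from the received messages (None = no message on that link)
  and the environment input of the round.\<close>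
record ('v,'s,'m,'i) algorithm =
  a_init :: "'v \<Rightarrow> 's"
  a_send :: "'v \<Rightarrow> 's \<Rightarrow> 'v \<Rightarrow> 'm"
  a_upd  :: "'v \<Rightarrow> 's \<Rightarrow> ('v \<Rightarrow> 'm option) \<Rightarrow> 'i \<Rightarrow> 's"

fun exec :: "('v,'s,'m,'i) algorithm \<Rightarrow> 'v set \<Rightarrow> ('v \<times> 'v) set \<Rightarrow> (nat \<Rightarrow> 'v \<Rightarrow> 'i)
              \<Rightarrow> nat \<Rightarrow> 'v \<Rightarrow> 's" where
  "exec A V E env 0 v = a_init A v"
| "exec A V E env (Suc r) v =
     a_upd A v (exec A V E env r v)
       (\<lambda>w. if w \<in> V \<and> (w, v) \<in> E then Some (a_send A w (exec A V E env r w) v) else None)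
       (env r v)"

text \<open>Execution of the reinforced algorithm A' on V' = V \<times> [l], P = fst,
  E' = {(v',w'). (P v', P w') \<in> E}.  om r x y means: in round r the message of x
  on link (x,y) is omitted.\<close>
fun exec_reinf :: "('v,'s,'m,'i) algorithm \<Rightarrow> 'v set \<Rightarrow> ('v \<times> 'v) set \<Rightarrow> nat
     \<Rightarrow> (nat \<Rightarrow> 'v \<Rightarrow> 'i) \<Rightarrow> (nat \<Rightarrow> ('v \<times> nat) \<Rightarrow> ('v \<times> nat) \<Rightarrow> bool)
     \<Rightarrow> nat \<Rightarrow> ('v \<times> nat) \<Rightarrow> 's" where
  "exec_reinf A V E l env om 0 x = a_init A (fst x)"
| "exec_reinf A V E l env om (Suc r) x =
     a_upd A (fst x) (exec_reinf A V E l env om r x)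
       (\<lambda>w. if w \<in> V \<and> (w, fst x) \<in> E \<and> (\<exists>j<l. \<not> om r (w, j) x)
            then Some (a_send A w
                   (exec_reinf A V E l env om r (w, SOME j. j < l \<and> \<not> om r (w, j) x)) (fst x))
            else None)
       (env (r) (fst x))"

definition strong_sim :: "('v,'s,'m,'i) algorithm \<Rightarrow> 'v set \<Rightarrow> ('v \<times> 'v) set \<Rightarrow> nat
     \<Rightarrow> ('v \<times> nat) set \<Rightarrow> bool" where
  "strong_sim A V E l F \<longleftrightarrow>
     (\<forall>env om. (\<forall>r x y. om r x y \<longrightarrow> x \<in> F) \<longrightarrow>
        (\<forall>r. \<forall>x \<in> V \<times> {..<l}. exec_reinf A V E l env om r x = exec A V E env r (fst x)))"

definition faults :: "'v set \<Rightarrow> nat \<Rightarrow> real \<Rightarrow> ('v \<times> nat) set pmf" where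
  "faults V l p = map_pmf (\<lambda>b. {x. b x}) (Pi_pmf (V \<times> {..<l}) False (\<lambda>_. bernoulli_pmf p))"

definition valid_reinforcement :: "(nat \<Rightarrow> 'v set) \<Rightarrow> (nat \<Rightarrow> ('v \<times> 'v) set) \<Rightarrow> nat
     \<Rightarrow> (nat \<Rightarrow> real) \<Rightarrow> bool" where
  "valid_reinforcement V E f p \<longleftrightarrow>
     (\<forall>A :: nat \<Rightarrow> ('v, nat, nat, nat) algorithm.
        (\<lambda>n. measure_pmf.prob (faults (V n) (f+1) (p n)) {F. strong_sim (A n) (V n) (E n) (f+1) F})
          \<longlonglongrightarrow> 1)"

end

theory Submission
  imports Defs
begin

text \<open>
  A node of G is simulated correctly as long as one of its l copies is correct, because its
  out-neighbours then still receive its message from that copy. All l copies of a node are faulty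
  with probability p^l, independently over the nodes, so none of m given nodes is fully faulty
  with probability (1 - p^l)^m. If p = o(n^(-1/l)) then n p^l \<rightarrow> 0, and Bernoulli's inequality
  gives (1 - p^l)^n \<rightarrow> 1. If p = \<omega>(n^(-1/l)) and m = \<Omega>(n) then m p^l \<rightarrow> \<infinity>, and
  (1 - p^l)^m \<le> exp (- m p^l) \<rightarrow> 0. A fully faulty node v with an out-neighbour w may then stay
  silent; the copies of w notice this in the first round, whereas w never misses a message in
  the fault-free run, so the reinforcement is not valid.
\<close>

lemma Pi_pmf_curry:
  assumes "finite A" "finite B"
  shows "map_pmf curry (Pi_pmf (A \<times> B) d p) = Pi_pmf A (\<lambda>_. d) (\<lambda>a. Pi_pmf B d (\<lambda>b. p (a, b)))"
proof (rule pmf_eqI)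
  fix h :: "'a \<Rightarrow> 'b \<Rightarrow> 'c"
  have "inj (curry :: ('a \<times> 'b \<Rightarrow> 'c) \<Rightarrow> _)"
    by (intro injI) (metis case_prod_curry)
  then have "pmf (map_pmf curry (Pi_pmf (A \<times> B) d p)) h = pmf (Pi_pmf (A \<times> B) d p) (case_prod h)"
    by (metis curry_case_prod pmf_map_inj')
  also have "\<dots> = pmf (Pi_pmf A (\<lambda>_. d) (\<lambda>a. Pi_pmf B d (\<lambda>b. p (a, b)))) h"
  proof (cases "\<forall>a b. (a, b) \<notin> A \<times> B \<longrightarrow> h a b = d")
    case True
    then show ?thesis
      using assms by (simp add: pmf_Pi fun_eq_iff prod.cartesian_product case_prod_beta')
  next
    case False
    then obtain a b where "(a, b) \<notin> A \<times> B" "h a b \<noteq> d" by blast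
    then show ?thesis
      using assms by (cases "a \<in> A") (auto simp: pmf_Pi fun_eq_iff)
  qed
  finally show "pmf (map_pmf curry (Pi_pmf (A \<times> B) d p)) h = \<dots>" .
qed

lemma prob_Pi_pmf_bernoulli_not_all:
  assumes "finite I" "0 \<le> p" "p \<le> 1"
  shows "measure_pmf.prob (Pi_pmf I False (\<lambda>_. bernoulli_pmf p)) {h. \<not> (\<forall>i\<in>I. h i)}
           = 1 - p ^ card I"
proof -
  let ?Q = "Pi_pmf I False (\<lambda>_. bernoulli_pmf p)"
  have "measure_pmf.prob ?Q (Pi I (\<lambda>_. {True})) = p ^ card I"
    using assms by (simp add: measure_Pi_pmf_Pi measure_pmf_single)
  moreover have "{h. \<not> (\<forall>i\<in>I. h i)} = space (measure_pmf ?Q) - Pi I (\<lambda>_. {True})"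
    by auto
  ultimately show ?thesis
    using measure_pmf.prob_compl[of "Pi I (\<lambda>_. {True})" ?Q] by simp
qed

lemma prob_faults_no_fully_faulty:
  assumes "finite V" "S \<subseteq> V" "0 \<le> p" "p \<le> 1"
  shows "measure_pmf.prob (faults V l p) {F. \<forall>v\<in>S. \<not> (\<forall>i<l. (v, i) \<in> F)} = (1 - p ^ l) ^ card S"
proof -
  let ?Q = "Pi_pmf {..<l} False (\<lambda>_. bernoulli_pmf p)"
  let ?B = "\<lambda>v. if v \<in> S then {h. \<not> (\<forall>i<l. h i)} else UNIV"
  have "{b. \<forall>v\<in>S. \<not> (\<forall>i<l. b (v, i))} = curry -` Pi V ?B"
    using assms(2) by (auto simp: Pi_iff split: if_splits)
  then have "measure_pmf.prob (faults V l p) {F. \<forall>v\<in>S. \<not> (\<forall>i<l. (v, i) \<in> F)}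
      = measure_pmf.prob (map_pmf curry (Pi_pmf (V \<times> {..<l}) False (\<lambda>_. bernoulli_pmf p))) (Pi V ?B)"
    by (simp add: faults_def)
  also have "\<dots> = (\<Prod>v\<in>V. measure_pmf.prob ?Q (?B v))"
    using assms(1) by (simp add: Pi_pmf_curry measure_Pi_pmf_Pi)
  also have "\<dots> = (\<Prod>v\<in>V. if v \<in> S then 1 - p ^ l else 1)"
    using prob_Pi_pmf_bernoulli_not_all[of "{..<l}" p] assms(3,4) by (intro prod.cong refl) (auto simp: Ball_def)
  also have "\<dots> = (1 - p ^ l) ^ card S"
    using assms(1,2) by (simp add: prod.If_cases Int_absorb1)
  finally show ?thesis .
qed

lemma prob_faults_some_fully_faulty:
  assumes "finite V" "S \<subseteq> V" "0 \<le> p" "p \<le> 1"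
  shows "measure_pmf.prob (faults V l p) {F. \<exists>v\<in>S. \<forall>i<l. (v, i) \<in> F} = 1 - (1 - p ^ l) ^ card S"
proof -
  let ?G = "{F. \<forall>v\<in>S. \<not> (\<forall>i<l. (v, i) \<in> F)}"
  have "{F. \<exists>v\<in>S. \<forall>i<l. (v, i) \<in> F} = space (measure_pmf (faults V l p)) - ?G"
    by auto
  then have "measure_pmf.prob (faults V l p) {F. \<exists>v\<in>S. \<forall>i<l. (v, i) \<in> F}
      = 1 - measure_pmf.prob (faults V l p) ?G"
    by (simp only: measure_pmf.prob_compl sets_measure_pmf UNIV_I)
  also have "\<dots> = 1 - (1 - p ^ l) ^ card S"
    by (simp only: prob_faults_no_fully_faulty[OF assms])
  finally show ?thesis .
qed

lemma one_minus_power_tendsto_1: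
  fixes q :: "nat \<Rightarrow> real"
  assumes "\<And>n. 0 \<le> q n \<and> q n \<le> 1" "(\<lambda>n. real (m n) * q n) \<longlonglongrightarrow> 0"
  shows "(\<lambda>n. (1 - q n) ^ m n) \<longlonglongrightarrow> 1"
proof (rule tendsto_sandwich)
  show "\<forall>\<^sub>F n in sequentially. 1 - real (m n) * q n \<le> (1 - q n) ^ m n"
    using assms(1) Bernoulli_inequality[of "- q _"] by (intro always_eventually) simp
  show "\<forall>\<^sub>F n in sequentially. (1 - q n) ^ m n \<le> 1"
    using assms(1) by (intro always_eventually allI power_le_one) auto
  show "(\<lambda>n. 1 - real (m n) * q n) \<longlonglongrightarrow> 1"
    using tendsto_diff[OF tendsto_const assms(2), of 1] by simp
qed simp

lemma one_minus_power_tendsto_0: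
  fixes q :: "nat \<Rightarrow> real"
  assumes "\<And>n. 0 \<le> q n \<and> q n \<le> 1" "filterlim (\<lambda>n. real (m n) * q n) at_top sequentially"
  shows "(\<lambda>n. (1 - q n) ^ m n) \<longlonglongrightarrow> 0"
proof (rule tendsto_sandwich)
  have "(1 - q n) ^ m n \<le> exp (- q n) ^ m n" for n
    using assms(1) exp_ge_add_one_self[of "- q n"] by (intro power_mono) auto
  then show "\<forall>\<^sub>F n in sequentially. (1 - q n) ^ m n \<le> exp (- (real (m n) * q n))"
    by (simp add: exp_of_nat_mult[symmetric])
  show "\<forall>\<^sub>F n in sequentially. 0 \<le> (1 - q n) ^ m n"
    using assms(1) by simp
  show "(\<lambda>n. exp (- (real (m n) * q n))) \<longlonglongrightarrow> 0"
    using filterlim_compose[OF exp_at_bot filterlim_uminus_at_bot_at_top[THEN filterlim_compose, OF assms(2)]]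
    by simp
qed simp

lemma power_divide_powr_neg_inverse:
  fixes q :: real
  assumes "0 < n" "0 < l"
  shows "(q / real n powr (- 1 / real l)) ^ l = real n * q ^ l"
proof -
  have "(real n powr (- 1 / real l)) ^ l = real n powr (- 1 / real l * real l)"
    using assms by (simp add: powr_realpow[symmetric] powr_powr)
  also have "\<dots> = inverse (real n)"
    using assms by (simp add: powr_minus)
  finally show ?thesis
    using assms by (simp add: field_simps)
qed

lemma smallo_powr_imp_tendsto_0:
  fixes p :: "nat \<Rightarrow> real"
  assumes "p \<in> o(\<lambda>n. real n powr (- 1 / real l))" "0 < l"
  shows "(\<lambda>n. real n * p n ^ l) \<longlonglongrightarrow> 0"
proof -
  have "(\<lambda>n. (p n / real n powr (- 1 / real l)) ^ l) \<longlonglongrightarrow> 0 ^ l"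
    by (intro tendsto_power smalloD_tendsto[OF assms(1)])
  moreover have "\<forall>\<^sub>F n in sequentially. (p n / real n powr (- 1 / real l)) ^ l = real n * p n ^ l"
    using eventually_gt_at_top[of 0]
    by eventually_elim (rule power_divide_powr_neg_inverse[OF _ assms(2)])
  ultimately have "(\<lambda>n. real n * p n ^ l) \<longlonglongrightarrow> 0 ^ l"
    by (rule Lim_transform_eventually)
  then show ?thesis
    unfolding zero_power[OF assms(2)] .
qed

lemma smallomega_powr_imp_filterlim_at_top:
  fixes p :: "nat \<Rightarrow> real"
  assumes "p \<in> \<omega>(\<lambda>n. real n powr (- 1 / real l))" "0 < l" "\<And>n. 0 \<le> p n"
  shows "filterlim (\<lambda>n. real n * p n ^ l) at_top sequentially"
proof -
  have "\<forall>\<^sub>F n in sequentially. real n powr (- 1 / real l) \<noteq> 0"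
    using eventually_gt_at_top[of 0] by eventually_elim simp
  then have "filterlim (\<lambda>n. norm (p n / real n powr (- 1 / real l))) at_top sequentially"
    by (rule smallomegaD_filterlim_at_top_norm[OF assms(1)])
  then have "filterlim (\<lambda>n. (p n / real n powr (- 1 / real l)) ^ l) at_top sequentially"
    using assms(2,3) by (intro filterlim_pow_at_top) simp_all
  moreover have "\<forall>\<^sub>F n in sequentially. (p n / real n powr (- 1 / real l)) ^ l = real n * p n ^ l"
    using eventually_gt_at_top[of 0]
    by eventually_elim (rule power_divide_powr_neg_inverse[OF _ assms(2)])
  ultimately show ?thesis
    by (rule filterlim_cong[THEN iffD1, OF refl refl, rotated])
qed

lemma bigomega_mult_filterlim_at_top:
  fixes q :: "nat \<Rightarrow> real"
  assumes "(\<lambda>n. real (m n)) \<in> \<Omega>(\<lambda>n. real n)" "filterlim (\<lambda>n. real n * q n) at_top sequentially"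
    and "\<And>n. 0 \<le> q n"
  shows "filterlim (\<lambda>n. real (m n) * q n) at_top sequentially"
proof -
  obtain c where c: "c > 0" "\<forall>\<^sub>F n in sequentially. c * real n \<le> real (m n)"
    using landau_omega.bigE[OF assms(1)] by auto
  have "filterlim (\<lambda>n. c * (real n * q n)) at_top sequentially"
    using c(1) by (intro filterlim_tendsto_pos_mult_at_top[OF tendsto_const _ assms(2)])
  moreover have "\<forall>\<^sub>F n in sequentially. c * (real n * q n) \<le> real (m n) * q n"
    using c(2) by eventually_elim (simp add: assms(3) mult.assoc[symmetric] mult_right_mono)
  ultimately show ?thesis
    by (rule filterlim_at_top_mono)
qed

lemma strong_sim_if_some_copy_correct:
  fixes A :: "('v, 's, 'm, 'i) algorithm"
  assumes "\<forall>v\<in>V. \<exists>i<l. (v, i) \<notin> F"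
  shows "strong_sim A V E l F"
  unfolding strong_sim_def
proof (intro allI impI)
  fix env :: "nat \<Rightarrow> 'v \<Rightarrow> 'i" and om :: "nat \<Rightarrow> 'v \<times> nat \<Rightarrow> 'v \<times> nat \<Rightarrow> bool" and r
  assume "\<forall>r x y. om r x y \<longrightarrow> x \<in> F"
  then have received: "\<exists>j<l. \<not> om r (w, j) x" if "w \<in> V" for r w x
    using assms that by blast
  show "\<forall>x\<in>V \<times> {..<l}. exec_reinf A V E l env om r x = exec A V E env r (fst x)"
  proof (induction r)
    case (Suc r)
    \<comment> \<open>Whichever copy of \<open>w\<close> is chosen, its message did reach \<open>x\<close>, and by induction it was
      sent from the fault-free state of \<open>w\<close>.\<close>
    have "exec_reinf A V E l env om r (w, SOME j. j < l \<and> \<not> om r (w, j) x) = exec A V E env r w"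
      if "w \<in> V" for w x
      using Suc.IH someI_ex[OF received[OF that]] that by auto
    then show ?case
      using Suc.IH received by (auto intro!: arg_cong2[where f = "\<lambda>m s. a_upd A _ s m _"])
  qed simp
qed

definition silence_detector :: "'v set \<Rightarrow> ('v \<times> 'v) set \<Rightarrow> ('v, nat, nat, nat) algorithm" where
  "silence_detector V E =
     \<lparr>a_init = (\<lambda>_. 0), a_send = (\<lambda>_ _ _. 0),
      a_upd = (\<lambda>v s msgs i. if msgs = (\<lambda>w. if w \<in> V \<and> (w, v) \<in> E then Some 0 else None) then 0 else 1)\<rparr>"

lemma strong_simD:
  assumes "strong_sim A V E l F" "\<And>r x y. om r x y \<Longrightarrow> x \<in> F" "x \<in> V \<times> {..<l}"
  shows "exec_reinf A V E l env om r x = exec A V E env r (fst x)"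
  using assms unfolding strong_sim_def by blast

lemma not_strong_sim_silence_detector:
  assumes "E \<subseteq> V \<times> V" "0 < l" "(v, w) \<in> E" "\<forall>i<l. (v, i) \<in> F"
  shows "\<not> strong_sim (silence_detector V E) V E l F"
proof
  let ?D = "silence_detector V E" and ?env = "\<lambda>_ _. 0" and ?om = "\<lambda>_ x _. x \<in> F"
  assume "strong_sim ?D V E l F"
  then have "exec_reinf ?D V E l ?env ?om (Suc 0) (w, 0) = exec ?D V E ?env (Suc 0) (fst (w, 0))"
    using strong_simD[of ?D V E l F ?om "(w, 0)" ?env "Suc 0"] assms(1-3) by auto
  moreover have "exec ?D V E ?env (Suc 0) w = 0"
    by (simp add: silence_detector_def cong: if_cong)
  moreover have "exec_reinf ?D V E l ?env ?om (Suc 0) (w, 0) = 1"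
    using assms by (simp add: silence_detector_def fun_eq_iff cong: if_cong) blast
  ultimately show False
    by simp
qed

lemma measure_pmf_prob_tendsto_1_mono:
  assumes "(\<lambda>n. measure_pmf.prob (M n) (A n)) \<longlonglongrightarrow> 1" "\<And>n. A n \<subseteq> B n"
  shows "(\<lambda>n. measure_pmf.prob (M n) (B n)) \<longlonglongrightarrow> 1"
proof (rule tendsto_sandwich[OF _ _ assms(1) tendsto_const])
  show "\<forall>\<^sub>F n in sequentially. measure_pmf.prob (M n) (A n) \<le> measure_pmf.prob (M n) (B n)"
    using assms(2) by (intro always_eventually allI measure_pmf.finite_measure_mono) auto
  show "\<forall>\<^sub>F n in sequentially. measure_pmf.prob (M n) (B n) \<le> 1"
    by (intro always_eventually allI measure_pmf.prob_le_1)
qed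

lemma prob_no_fully_faulty_tendsto_1:
  assumes "\<And>n. finite (V n)" "\<And>n. card (V n) = n" "\<And>n. 0 \<le> p n \<and> p n \<le> 1"
    and "p \<in> o(\<lambda>n. real n powr (- 1 / real l))" "0 < l"
  shows "(\<lambda>n. measure_pmf.prob (faults (V n) l (p n)) {F. \<forall>v\<in>V n. \<not> (\<forall>i<l. (v, i) \<in> F)}) \<longlonglongrightarrow> 1"
proof -
  have "(\<lambda>n. (1 - p n ^ l) ^ n) \<longlonglongrightarrow> 1"
    using assms(3) smallo_powr_imp_tendsto_0[OF assms(4,5)]
    by (intro one_minus_power_tendsto_1[where m = "\<lambda>n. n"]) (simp_all add: power_le_one)
  then show ?thesis
    using assms(1-3) by (simp only: prob_faults_no_fully_faulty assms(2) subset_refl)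
qed

lemma prob_no_fully_faulty_tendsto_0:
  assumes "\<And>n. finite (V n)" "\<And>n. S n \<subseteq> V n" "\<And>n. 0 \<le> p n \<and> p n \<le> 1"
    and "(\<lambda>n. real (card (S n))) \<in> \<Omega>(\<lambda>n. real n)"
    and "p \<in> \<omega>(\<lambda>n. real n powr (- 1 / real l))" "0 < l"
  shows "(\<lambda>n. measure_pmf.prob (faults (V n) l (p n)) {F. \<forall>v\<in>S n. \<not> (\<forall>i<l. (v, i) \<in> F)}) \<longlonglongrightarrow> 0"
proof -
  have p: "0 \<le> p n" "p n \<le> 1" for n
    using assms(3) by auto
  have "filterlim (\<lambda>n. real n * p n ^ l) at_top sequentially"
    by (intro smallomega_powr_imp_filterlim_at_top[OF assms(5,6)] p)
  then have "filterlim (\<lambda>n. real (card (S n)) * p n ^ l) at_top sequentially"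
    by (intro bigomega_mult_filterlim_at_top[OF assms(4)] zero_le_power p)
  then have "(\<lambda>n. (1 - p n ^ l) ^ card (S n)) \<longlonglongrightarrow> 0"
    by (intro one_minus_power_tendsto_0) (simp_all add: p power_le_one)
  then show ?thesis
    using assms(1,2) p by (simp only: prob_faults_no_fully_faulty)
qed

lemma prob_some_fully_faulty_tendsto_1:
  assumes "\<And>n. finite (V n)" "\<And>n. S n \<subseteq> V n" "\<And>n. 0 \<le> p n \<and> p n \<le> 1"
    and "(\<lambda>n. real (card (S n))) \<in> \<Omega>(\<lambda>n. real n)"
    and "p \<in> \<omega>(\<lambda>n. real n powr (- 1 / real l))" "0 < l"
  shows "(\<lambda>n. measure_pmf.prob (faults (V n) l (p n)) {F. \<exists>v\<in>S n. \<forall>i<l. (v, i) \<in> F}) \<longlonglongrightarrow> 1"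
proof -
  have "measure_pmf.prob (faults (V n) l (p n)) {F. \<exists>v\<in>S n. \<forall>i<l. (v, i) \<in> F}
      = 1 - measure_pmf.prob (faults (V n) l (p n)) {F. \<forall>v\<in>S n. \<not> (\<forall>i<l. (v, i) \<in> F)}" for n
    using assms(1-3) by (simp only: prob_faults_some_fully_faulty prob_faults_no_fully_faulty)
  moreover have "(\<lambda>n. 1 - measure_pmf.prob (faults (V n) l (p n)) {F. \<forall>v\<in>S n. \<not> (\<forall>i<l. (v, i) \<in> F)})
      \<longlonglongrightarrow> 1 - 0"
    by (intro tendsto_diff tendsto_const prob_no_fully_faulty_tendsto_0[OF assms])
  ultimately show ?thesis
    by (simp only: diff_zero)
qed

lemma not_valid_reinforcement:
  assumes "\<And>n. E n \<subseteq> V n \<times> V n"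
    and "(\<lambda>n. measure_pmf.prob (faults (V n) (f+1) (p n))
           {F. \<forall>v\<in>{v \<in> V n. \<exists>w. (v, w) \<in> E n}. \<not> (\<forall>i<f+1. (v, i) \<in> F)}) \<longlonglongrightarrow> 0"
  shows "\<not> valid_reinforcement V E f p"
proof
  assume "valid_reinforcement V E f p"
  then have "(\<lambda>n. measure_pmf.prob (faults (V n) (f+1) (p n))
      {F. strong_sim (silence_detector (V n) (E n)) (V n) (E n) (f+1) F}) \<longlonglongrightarrow> 1"
    unfolding valid_reinforcement_def by (rule allE)
  then have "(\<lambda>n. measure_pmf.prob (faults (V n) (f+1) (p n))
      {F. \<forall>v\<in>{v \<in> V n. \<exists>w. (v, w) \<in> E n}. \<not> (\<forall>i<f+1. (v, i) \<in> F)}) \<longlonglongrightarrow> 1"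
    by (rule measure_pmf_prob_tendsto_1_mono) (use not_strong_sim_silence_detector[OF assms(1), of "f+1"] in fastforce)
  then have "(0::real) = 1"
    by (rule LIMSEQ_unique[OF assms(2)])
  then show False
    by simp
qed

theorem theorem4:
  fixes V :: "nat \<Rightarrow> 'v set" and E :: "nat \<Rightarrow> ('v \<times> 'v) set"
    and f :: nat and p :: "nat \<Rightarrow> real"
  assumes finV: "\<And>n. finite (V n)"
    and cardV: "\<And>n. card (V n) = n"
    and EV: "\<And>n. E n \<subseteq> V n \<times> V n"
    and p01: "\<And>n. 0 \<le> p n \<and> p n \<le> 1"
  shows
    "(p \<in> o(\<lambda>n. real n powr (- 1 / real (f + 1))) \<longrightarrow>
       (\<lambda>n. measure_pmf.prob (faults (V n) (f+1) (p n))
              {F. \<forall>v \<in> V n. \<not> (\<forall>i < f+1. (v, i) \<in> F)}) \<longlonglongrightarrow> 1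
     \<and> (\<forall>A :: nat \<Rightarrow> ('v, 's, 'm, 'i) algorithm.
          (\<lambda>n. measure_pmf.prob (faults (V n) (f+1) (p n))
                 {F. strong_sim (A n) (V n) (E n) (f+1) F}) \<longlonglongrightarrow> 1))
   \<and> ((\<lambda>n. real (card {v \<in> V n. \<exists>w. (v, w) \<in> E n})) \<in> \<Omega>(\<lambda>n. real n)
       \<and> p \<in> \<omega>(\<lambda>n. real n powr (- 1 / real (f + 1))) \<longrightarrow>
       (\<lambda>n. measure_pmf.prob (faults (V n) (f+1) (p n))
              {F. \<exists>v \<in> V n. (\<exists>w. (v, w) \<in> E n) \<and> (\<forall>i < f+1. (v, i) \<in> F)}) \<longlonglongrightarrow> 1
     \<and> \<not> valid_reinforcement V E f p)"
proof -
  let ?P = "\<lambda>n. measure_pmf.prob (faults (V n) (f+1) (p n))"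
  define S where "S n = {v \<in> V n. \<exists>w. (v, w) \<in> E n}" for n
  have SV: "S n \<subseteq> V n" for n
    by (auto simp: S_def)
  show ?thesis
    unfolding S_def[symmetric]
  proof (intro conjI impI allI; (elim conjE)?)
    assume small: "p \<in> o(\<lambda>n. real n powr (- 1 / real (f + 1)))"
    show "(\<lambda>n. ?P n {F. \<forall>v \<in> V n. \<not> (\<forall>i < f+1. (v, i) \<in> F)}) \<longlonglongrightarrow> 1"
      by (rule prob_no_fully_faulty_tendsto_1[OF finV cardV p01 small]) simp
    then show "(\<lambda>n. ?P n {F. strong_sim (A n) (V n) (E n) (f+1) F}) \<longlonglongrightarrow> 1" for A
      by (rule measure_pmf_prob_tendsto_1_mono) (auto intro: strong_sim_if_some_copy_correct)
  next
    assume dense: "(\<lambda>n. real (card (S n))) \<in> \<Omega>(\<lambda>n. real n)"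
      and large: "p \<in> \<omega>(\<lambda>n. real n powr (- 1 / real (f + 1)))"
    have "{F. \<exists>v\<in>S n. \<forall>i<f+1. (v, i) \<in> F}
        = {F. \<exists>v \<in> V n. (\<exists>w. (v, w) \<in> E n) \<and> (\<forall>i < f+1. (v, i) \<in> F)}" for n
      by (auto simp: S_def)
    then show "(\<lambda>n. ?P n {F. \<exists>v \<in> V n. (\<exists>w. (v, w) \<in> E n) \<and> (\<forall>i < f+1. (v, i) \<in> F)}) \<longlonglongrightarrow> 1"
      using prob_some_fully_faulty_tendsto_1[OF finV SV p01 dense large]
      by simp
    show "\<not> valid_reinforcement V E f p"
      using prob_no_fully_faulty_tendsto_0[OF finV SV p01 dense large]
      by (intro not_valid_reinforcement[OF EV]) (simp add: S_def)
  qed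
qed

end
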